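(* Let $(X,\rho)$ be a symmetric quandle, $Y$ an $(X,\rho)$-set, $A$ an abelian group, and $\theta$ a $2$-cocycle of $C^*_{{\rm Q},\rho}(X,A)_Y$. Let $D$ be a diagram of an unoriented link in $\mathbb{R}^3$, and let $D^+$ be the diagram $D$ equipped with an arbitrary orientation. Then $\Phi_\theta(D)=\Phi^{\rm ori}_\theta(D^+)$ as multi-sets.
   Context: A quandle is a set $X$ with a binary operation $(x,y)\mapsto x^y$ such that $x^x=x$ for all $x$; for all $x,y$ there is a unique $z$ with $z^y=x$ (written $z=x^{y^{-1}}$); and $(x^y)^z=(x^z)^{(y^z)}$ for all $x,y,z$. A good involution of $X$ is a map $\rho:X\to X$ with $\rho\circ\rho={\rm id}$, $\rho(x^y)=\rho(x)^y$ and $x^{\rho(y)}=x^{y^{-1}}$ for all $x,y$; the pair $(X,\rho)$ is a symmetric quandle. Its associated group $G_{(X,\rho)}$ is the group with generators the elements of $X$ and relations $x^y=y^{-1}xy$ and $\rho(x)=x^{-1}$ ($x,y\in X$). An $(X,\rho)$-set is a set $Y$ with a right action of $G_{(X,\rho)}$; for $y\in Y$, $x\in X$ write $y^x$ for the action of (the image of) $x$, and $y^{x_1x_2}=(y^{x_1})^{x_2}$. Since $G_{(X,\rho)}$ is a quotient of the group $G_X=\langle X\mid x^y=y^{-1}xy\rangle$, $Y$ is also a right $G_X$-set. Chain complexes: for $n\ge1$ let $C_n(X)_Y$ be the free abelian group on $Y\times X^n$, $C_0(X)_Y$ the free abelian group on $Y$, and $C_n(X)_Y=0$ for $n<0$,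 with $\partial_n(y,x_1,\dots,x_n)=\sum_{i=1}^n(-1)^i\{(y,x_1,\dots,\widehat{x_i},\dots,x_n)-(y^{x_i},x_1^{x_i},\dots,x_{i-1}^{x_i},\widehat{x_i},x_{i+1},\dots,x_n)\}$ for $n\ge1$ and $\partial_n=0$ otherwise. Let $D^{\rm Q}_n(X)_Y$ be generated by the $(y,x_1,\dots,x_n)$ with $x_i=x_{i+1}$ for some $i$, and $D^\rho_n(X)_Y$ by the elements $(y,x_1,\dots,x_n)+(y^{x_i},x_1^{x_i},\dots,x_{i-1}^{x_i},\rho(x_i),x_{i+1},\dots,x_n)$, $1\le i\le n$. These are subcomplexes; set $C^{\rm Q}_*(X)_Y=C_*(X)_Y/D^{\rm Q}_*(X)_Y$ and $C^{{\rm Q},\rho}_*(X)_Y=C_*(X)_Y/(D^{\rm Q}_*(X)_Y+D^\rho_*(X)_Y)$, and for an abelian group $A$ let $C^*_{\rm Q}(X,A)_Y={\rm Hom}(C^{\rm Q}_*(X)_Y,A)$ and $C^*_{{\rm Q},\rho}(X,A)_Y={\rm Hom}(C^{{\rm Q},\rho}_*(X)_Y,A)$. A cocycle of $C^*_{{\rm Q},\rho}(X,A)_Y$ is, via the quotient map, also a cocycle of $C^*_{\rm Q}(X,A)_Y$. Unoriented colorings: for a link diagram $D\subset\mathbb{R}^2$, the semi-arcs are the arcs obtained by cutting the over-arcs of $D$ at the crossings. Assign to each semi-arc a normal orientation and an element of $X$ such that at each crossing: (i) if the two semi-arcs forming the over-arc are labeled $x_1,x_2$, then $x_1=x_2$ when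 their normal orientations are coherent and $x_1=\rho(x_2)$ otherwise; (ii) if the two under semi-arcs $e_1,e_2$ are labeled $x_1,x_2$ and one of the over semi-arcs, labeled $x_3$, has normal orientation pointing from $e_1$ to $e_2$, then $x_1^{x_3}=x_2$ when the normal orientations of $e_1,e_2$ are coherent and $x_1^{x_3}=\rho(x_2)$ otherwise. A basic inversion reverses the normal orientation of one semi-arc and replaces its label $x$ by $\rho(x)$. An $(X,\rho)$-coloring is an equivalence class of such assignments under basic inversions. An $(X,\rho)_Y$-coloring is an $(X,\rho)$-coloring together with an assignment of elements of $Y$ to the complementary regions of $D$ such that whenever a semi-arc labeled $x$ has normal orientation pointing from a region labeled $y_1$ to a region labeled $y_2$, then $y_1^x=y_2$. Weight of a crossing $v$: choose one of the regions $f$ around $v$, with label $y$; let $e_1$ (under) and $e_2$ (over) be the semi-arcs at $v$ facing $f$, with (after basic inversions) normal orientations $n_1,n_2$ pointing away from $f$ and labels $x_1,x_2$; let $\epsilon=+1$ if $(n_2,n_1)$ is a positive basis of $\mathbb{R}^2$ and $-1$ otherwise; the weight is $\epsilon(y,x_1,x_2)$. Put $c_{D,C}=\sum_v(\text{weight of }v)\in C^{{\rm Q},\rho}_2(X)_Y$ (this is independent of the choices), and $\Phi_\theta(D)=\{\theta(c_{D,C})\mid C\text{ an }(X,\rho)_Y\text{-coloring of }D\}$ as a multi-set. Oriented colorings: for an oriented diagram $D^+$, give each semi-arc the normal orientation such that (orientation vector, normal vector) is a positive basis of $\mathbb{R}^2$. An $X_Y$-coloring of $D^+$ assigns elements of $X$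 to semi-arcs and of $Y$ to regions satisfying conditions (i), (ii) and the region condition above with these fixed normal orientations (so no basic inversions are used). The weight of a crossing and the chain $c_{D^+,C}\in C^{\rm Q}_2(X)_Y$ are defined in the same way, and $\Phi^{\rm ori}_\theta(D^+)=\{\theta(c_{D^+,C})\mid C\text{ an }X_Y\text{-coloring of }D^+\}$ as a multi-set. *)

theory Defs
  imports Main "HOL-Library.Equipollence"
begin

text \<open>A quandle is a type 'x with operation qop x y = x^y.\<close>
definition quandle :: "('x \<Rightarrow> 'x \<Rightarrow> 'x) \<Rightarrow> bool" where
  "quandle qop \<longleftrightarrow>
     (\<forall>x. qop x x = x) \<and>
     (\<forall>x y. \<exists>!z. qop z y = x) \<and>
     (\<forall>x y z. qop (qop x y) z = qop (qop x z) (qop y z))"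

text \<open>qinv qop x y is x^(y^-1), the unique z with z^y = x.\<close>
definition qinv :: "('x \<Rightarrow> 'x \<Rightarrow> 'x) \<Rightarrow> 'x \<Rightarrow> 'x \<Rightarrow> 'x" where
  "qinv qop x y = (THE z. qop z y = x)"

definition good_involution :: "('x \<Rightarrow> 'x \<Rightarrow> 'x) \<Rightarrow> ('x \<Rightarrow> 'x) \<Rightarrow> bool" where
  "good_involution qop \<rho> \<longleftrightarrow>
     (\<forall>x. \<rho> (\<rho> x) = x) \<and>
     (\<forall>x y. \<rho> (qop x y) = qop (\<rho> x) y) \<and>
     (\<forall>x y. qop x (\<rho> y) = qinv qop x y)"

definition symmetric_quandle :: "('x \<Rightarrow> 'x \<Rightarrow> 'x) \<Rightarrow> ('x \<Rightarrow> 'x) \<Rightarrow> bool" where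
  "symmetric_quandle qop \<rho> \<longleftrightarrow> quandle qop \<and> good_involution qop \<rho>"

text \<open>An (X,rho)-set: a right action of the group G_(X,rho) = < X | x^y = y^-1 x y, rho(x) = x^-1 >
  on the type 'y, written act y x = y^x.  By the universal property of a group presentation,
  such an action is exactly a family of bijections act(-,x) satisfying the defining relations:
  y^(x^z) = y^(z^-1 x z)  (stated after substituting y := y^z) and y^(rho x) = y^(x^-1).\<close>
definition Xrho_set :: "('x \<Rightarrow> 'x \<Rightarrow> 'x) \<Rightarrow> ('x \<Rightarrow> 'x) \<Rightarrow> ('y \<Rightarrow> 'x \<Rightarrow> 'y) \<Rightarrow> bool" where
  "Xrho_set qop \<rho> act \<longleftrightarrow>
     (\<forall>x. bij (\<lambda>y. act y x)) \<and>
     (\<forall>y x z. act (act y z) (qop x z) = act (act y x) z) \<and>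
     (\<forall>y x. act (act y x) (\<rho> x) = y)"

text \<open>Boundary of a generator (y, x_1, ..., x_n) of C_n(X)_Y, as a list of signed generators
  (True = coefficient +1, False = coefficient -1).  Index i (0-based) corresponds to i+1 in the
  paper, so the sign (-1)^(i+1) is + iff i is odd.\<close>
definition bdry :: "('x \<Rightarrow> 'x \<Rightarrow> 'x) \<Rightarrow> ('y \<Rightarrow> 'x \<Rightarrow> 'y) \<Rightarrow> 'y \<Rightarrow> 'x list
                    \<Rightarrow> (bool \<times> 'y \<times> 'x list) list" where
  "bdry qop act y xs =
     concat (map (\<lambda>i. [ (odd i, y, take i xs @ drop (Suc i) xs),
                        (\<not> odd i, act y (xs ! i),
                           map (\<lambda>x. qop x (xs ! i)) (take i xs) @ drop (Suc i) xs) ])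
             [0..<length xs])"

definition eval_chain :: "('y \<Rightarrow> 'x list \<Rightarrow> 'a::ab_group_add) \<Rightarrow> (bool \<times> 'y \<times> 'x list) list \<Rightarrow> 'a" where
  "eval_chain f c = sum_list (map (\<lambda>(p, y, xs). if p then f y xs else - f y xs) c)"

text \<open>A 2-cochain of C^*_{Q,rho}(X,A)_Y is a homomorphism C_2(X)_Y -> A vanishing on
  D^Q_2 + D^rho_2, i.e. a function theta on generators (y,x1,x2) vanishing on the generators of
  D^Q_2 and D^rho_2.  It is a cocycle iff theta o d_3 vanishes on all generators (y,x1,x2,x3).\<close>
definition two_cocycle_Qrho :: "('x \<Rightarrow> 'x \<Rightarrow> 'x) \<Rightarrow> ('x \<Rightarrow> 'x) \<Rightarrow> ('y \<Rightarrow> 'x \<Rightarrow> 'y)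
                               \<Rightarrow> ('y \<Rightarrow> 'x \<Rightarrow> 'x \<Rightarrow> 'a::ab_group_add) \<Rightarrow> bool" where
  "two_cocycle_Qrho qop \<rho> act \<theta> \<longleftrightarrow>
     (\<forall>y x. \<theta> y x x = 0) \<and>
     (\<forall>y x1 x2. \<theta> y x1 x2 + \<theta> (act y x1) (\<rho> x1) x2 = 0) \<and>
     (\<forall>y x1 x2. \<theta> y x1 x2 + \<theta> (act y x2) (qop x1 x2) (\<rho> x2) = 0) \<and>
     (\<forall>y x1 x2 x3. eval_chain (\<lambda>y' xs. \<theta> y' (xs ! 0) (xs ! 1)) (bdry qop act y [x1, x2, x3]) = 0)"

text \<open>A diagram is encoded by: crossings V, semi-arcs E (each with a fixed reference direction),
  regions F.  At a crossing v the four semi-arc ends are numbered 0,1,2,3 counterclockwise;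
  ends 0,2 belong to the under strand, ends 1,3 to the over strand.  sa v i is the semi-arc
  at end i and inc v i says whether its reference direction points into v.  lreg e / rreg e are
  the regions to the left / right of e w.r.t. its reference direction.\<close>
record ('v, 'e, 'f) diagram =
  crossings :: "'v set"
  arcs :: "'e set"
  regions :: "'f set"
  sa :: "'v \<Rightarrow> nat \<Rightarrow> 'e"
  inc :: "'v \<Rightarrow> nat \<Rightarrow> bool"
  lreg :: "'e \<Rightarrow> 'f"
  rreg :: "'e \<Rightarrow> 'f"

definition nxt :: "nat \<Rightarrow> nat" where "nxt k = Suc k mod 4"

text \<open>Region lying counterclockwise from end k (i.e. between ends k and k+1 mod 4).\<close>
definition corner :: "('v, 'e, 'f, 'z) diagram_scheme \<Rightarrow> 'v \<Rightarrow> nat \<Rightarrow> 'f" where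
  "corner D v k = (if inc D v k then rreg D (sa D v k) else lreg D (sa D v k))"

text \<open>Region lying clockwise from end k.\<close>
definition corner_cw :: "('v, 'e, 'f, 'z) diagram_scheme \<Rightarrow> 'v \<Rightarrow> nat \<Rightarrow> 'f" where
  "corner_cw D v k = (if inc D v k then lreg D (sa D v k) else rreg D (sa D v k))"

definition link_diagram :: "('v, 'e, 'f, 'z) diagram_scheme \<Rightarrow> bool" where
  "link_diagram D \<longleftrightarrow>
     finite (crossings D) \<and> finite (arcs D) \<and> finite (regions D) \<and> arcs D \<noteq> {} \<and>
     (\<forall>v\<in>crossings D. \<forall>i<4. sa D v i \<in> arcs D) \<and>
     (\<forall>e\<in>arcs D. lreg D e \<in> regions D \<and> rreg D e \<in> regions D \<and> lreg D e \<noteq> rreg D e) \<and>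
     (\<forall>e\<in>arcs D.
        (\<not> (\<exists>v\<in>crossings D. \<exists>i<4. sa D v i = e)) \<or>
        ((\<exists>!p. fst p \<in> crossings D \<and> snd p < 4 \<and> sa D (fst p) (snd p) = e \<and> inc D (fst p) (snd p)) \<and>
         (\<exists>!p. fst p \<in> crossings D \<and> snd p < 4 \<and> sa D (fst p) (snd p) = e \<and> \<not> inc D (fst p) (snd p)))) \<and>
     (\<forall>v\<in>crossings D. \<forall>i<4. corner D v i = corner_cw D v (nxt i)) \<and>
     (\<forall>f\<in>regions D. \<exists>e\<in>arcs D. f = lreg D e \<or> f = rreg D e)"

text \<open>An orientation: ori e = True iff the orientation of e agrees with its reference direction;
  at each crossing, along each strand (ends 0-2 and 1-3) the orientation enters at exactly one end.\<close>
definition orientation :: "('v, 'e, 'f, 'z) diagram_scheme \<Rightarrow> ('e \<Rightarrow> bool) \<Rightarrow> bool" where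
  "orientation D ori \<longleftrightarrow>
     (\<forall>v\<in>crossings D. \<forall>i<2.
        (inc D v i = ori (sa D v i)) \<noteq> (inc D v (i + 2) = ori (sa D v (i + 2))))"

text \<open>A normal orientation n: n e = True iff the normal of e points to the right of its
  reference direction (from lreg e to rreg e).  Conditions (i) and (ii) at each crossing:
  for an end i entered by the strand (i = 0,1) the normal is right of the strand's travel
  direction iff n e = inc; for an end left by the strand (i = 2,3) iff n e = (not inc).
  The right side of the over strand (travelling 1 -> 3) is the side of end 2.\<close>
definition crossing_conds :: "('x \<Rightarrow> 'x \<Rightarrow> 'x) \<Rightarrow> ('x \<Rightarrow> 'x) \<Rightarrow> ('v, 'e, 'f, 'z) diagram_scheme
                              \<Rightarrow> ('e \<Rightarrow> bool) \<Rightarrow> ('e \<Rightarrow> 'x) \<Rightarrow> bool" where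
  "crossing_conds qop \<rho> D n l \<longleftrightarrow>
     (\<forall>v\<in>crossings D.
        let e0 = sa D v 0; e1 = sa D v 1; e2 = sa D v 2; e3 = sa D v 3;
            r0 = (n e0 = inc D v 0); r1 = (n e1 = inc D v 1);
            r2 = (n e2 = (\<not> inc D v 2)); r3 = (n e3 = (\<not> inc D v 3))
        in (if r1 = r3 then l e1 = l e3 else l e1 = \<rho> (l e3)) \<and>
           (let efrom = (if r1 then e0 else e2); eto = (if r1 then e2 else e0)
            in qop (l efrom) (l e1) = (if r0 = r2 then l eto else \<rho> (l eto))))"

definition region_cond :: "('y \<Rightarrow> 'x \<Rightarrow> 'y) \<Rightarrow> ('v, 'e, 'f, 'z) diagram_scheme
                           \<Rightarrow> ('e \<Rightarrow> bool) \<Rightarrow> ('e \<Rightarrow> 'x) \<Rightarrow> ('f \<Rightarrow> 'y) \<Rightarrow> bool" where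
  "region_cond act D n l yl \<longleftrightarrow>
     (\<forall>e\<in>arcs D. if n e then act (yl (lreg D e)) (l e) = yl (rreg D e)
                         else act (yl (rreg D e)) (l e) = yl (lreg D e))"

definition valid_rep :: "('x \<Rightarrow> 'x \<Rightarrow> 'x) \<Rightarrow> ('x \<Rightarrow> 'x) \<Rightarrow> ('v, 'e, 'f, 'z) diagram_scheme
                         \<Rightarrow> ('e \<Rightarrow> bool) \<times> ('e \<Rightarrow> 'x) \<Rightarrow> bool" where
  "valid_rep qop \<rho> D r \<longleftrightarrow>
     (\<forall>e. e \<notin> arcs D \<longrightarrow> fst r e = False \<and> snd r e = undefined) \<and>
     crossing_conds qop \<rho> D (fst r) (snd r)"

definition basic_inv :: "('x \<Rightarrow> 'x) \<Rightarrow> ('e \<Rightarrow> bool) \<times> ('e \<Rightarrow> 'x) \<Rightarrow> 'e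
                         \<Rightarrow> ('e \<Rightarrow> bool) \<times> ('e \<Rightarrow> 'x)" where
  "basic_inv \<rho> r e = ((fst r)(e := \<not> fst r e), (snd r)(e := \<rho> (snd r e)))"

definition inv_step :: "('x \<Rightarrow> 'x) \<Rightarrow> ('v, 'e, 'f, 'z) diagram_scheme
     \<Rightarrow> ((('e \<Rightarrow> bool) \<times> ('e \<Rightarrow> 'x)) \<times> (('e \<Rightarrow> bool) \<times> ('e \<Rightarrow> 'x))) set" where
  "inv_step \<rho> D = {(r, basic_inv \<rho> r e) | r e. e \<in> arcs D}"

text \<open>(X,rho)_Y-colorings: a basic-inversion class of valid assignments together with
  region labels (restricted to the regions).\<close>
definition unori_colorings :: "('x \<Rightarrow> 'x \<Rightarrow> 'x) \<Rightarrow> ('x \<Rightarrow> 'x) \<Rightarrow> ('y \<Rightarrow> 'x \<Rightarrow> 'y)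
     \<Rightarrow> ('v, 'e, 'f, 'z) diagram_scheme
     \<Rightarrow> ((('e \<Rightarrow> bool) \<times> ('e \<Rightarrow> 'x)) set \<times> ('f \<Rightarrow> 'y)) set" where
  "unori_colorings qop \<rho> act D =
     {(C, yl). C \<in> {r. valid_rep qop \<rho> D r} // ((inv_step \<rho> D)\<^sup>*) \<and>
               (\<forall>f. f \<notin> regions D \<longrightarrow> yl f = undefined) \<and>
               (\<exists>r\<in>C. region_cond act D (fst r) (snd r) yl)}"

text \<open>Weight of crossing v computed at the region counterclockwise from end k
  (between ends k and k+1): normals are inverted (labels replaced by rho) so as to point away
  from that region; the under semi-arc is the even end; epsilon = +1 iff k is even.\<close>
definition crossing_weight :: "('x \<Rightarrow> 'x) \<Rightarrow> ('y \<Rightarrow> 'x \<Rightarrow> 'x \<Rightarrow> 'a::ab_group_add)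
     \<Rightarrow> ('v, 'e, 'f, 'z) diagram_scheme \<Rightarrow> ('e \<Rightarrow> bool) \<Rightarrow> ('e \<Rightarrow> 'x) \<Rightarrow> ('f \<Rightarrow> 'y)
     \<Rightarrow> 'v \<Rightarrow> nat \<Rightarrow> 'a" where
  "crossing_weight \<rho> \<theta> D n l yl v k =
     (let j = nxt k; ek = sa D v k; ej = sa D v j;
          ak = (n ek = (\<not> inc D v k)); aj = (n ej = inc D v j);
          xk = (if ak then l ek else \<rho> (l ek)); xj = (if aj then l ej else \<rho> (l ej));
          y = yl (corner D v k)
      in if even k then \<theta> y xk xj else - \<theta> y xj xk)"

definition Phi_unori :: "('x \<Rightarrow> 'x) \<Rightarrow> ('y \<Rightarrow> 'x \<Rightarrow> 'x \<Rightarrow> 'a::ab_group_add)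
     \<Rightarrow> ('v, 'e, 'f, 'z) diagram_scheme
     \<Rightarrow> (('e \<Rightarrow> bool) \<times> ('e \<Rightarrow> 'x)) set \<times> ('f \<Rightarrow> 'y) \<Rightarrow> 'a" where
  "Phi_unori \<rho> \<theta> D C =
     (let r = (SOME r. r \<in> fst C)
      in \<Sum>v\<in>crossings D. crossing_weight \<rho> \<theta> D (fst r) (snd r) (snd C) v 0)"

text \<open>Oriented diagram: normal n e = not (ori e) (normal to the left of the orientation).\<close>
definition ori_colorings :: "('x \<Rightarrow> 'x \<Rightarrow> 'x) \<Rightarrow> ('x \<Rightarrow> 'x) \<Rightarrow> ('y \<Rightarrow> 'x \<Rightarrow> 'y)
     \<Rightarrow> ('v, 'e, 'f, 'z) diagram_scheme \<Rightarrow> ('e \<Rightarrow> bool) \<Rightarrow> (('e \<Rightarrow> 'x) \<times> ('f \<Rightarrow> 'y)) set" where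
  "ori_colorings qop \<rho> act D ori =
     {(l, yl). (\<forall>e. e \<notin> arcs D \<longrightarrow> l e = undefined) \<and>
               (\<forall>f. f \<notin> regions D \<longrightarrow> yl f = undefined) \<and>
               crossing_conds qop \<rho> D (\<lambda>e. \<not> ori e) l \<and>
               region_cond act D (\<lambda>e. \<not> ori e) l yl}"

text \<open>Oriented weight: computed at the (unique) region from which both normals point away.\<close>
definition Phi_ori :: "('x \<Rightarrow> 'x) \<Rightarrow> ('y \<Rightarrow> 'x \<Rightarrow> 'x \<Rightarrow> 'a::ab_group_add)
     \<Rightarrow> ('v, 'e, 'f, 'z) diagram_scheme \<Rightarrow> ('e \<Rightarrow> bool) \<Rightarrow> ('e \<Rightarrow> 'x) \<times> ('f \<Rightarrow> 'y) \<Rightarrow> 'a" where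
  "Phi_ori \<rho> \<theta> D ori C =
     (\<Sum>v\<in>crossings D. \<Sum>k<4.
        if ((\<not> ori (sa D v k)) = (\<not> inc D v k)) \<and> ((\<not> ori (sa D v (nxt k))) = inc D v (nxt k))
        then crossing_weight \<rho> \<theta> D (\<lambda>e. \<not> ori e) (fst C) (snd C) v k else 0)"

end

theory Submission
  imports Defs
begin

text \<open>
  Reading the label of a semi-arc with its normal turned to a prescribed side (applying \<rho> when
  the normal has to be reversed) is invariant under basic inversions, and a basic-inversion class
  contains exactly one representative with any prescribed normals.  Choosing the normals induced
  by the orientation therefore identifies (X,\<rho>)_Y-colorings of D with X_Y-colorings of D+, the
  coloring conditions of the two kinds being the same statement about these normalised labels.
  For the weights, Phi_ori evaluates each crossing at the corner from which both normals point
  away, Phi_unori at a fixed corner; the two conditions defining D^\<rho>_2 say precisely that the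
  signed weight does not change when one passes to an adjacent corner.
\<close>

lemma symmetric_quandle_rho_rho:
  assumes "symmetric_quandle qop \<rho>"
  shows "\<rho> (\<rho> x) = x"
  using assms by (simp add: symmetric_quandle_def good_involution_def)

lemma symmetric_quandle_rho_qop:
  assumes "symmetric_quandle qop \<rho>"
  shows "\<rho> (qop x y) = qop (\<rho> x) y"
  using assms by (simp add: symmetric_quandle_def good_involution_def)

lemma symmetric_quandle_qop_rho_eq_iff:
  assumes "symmetric_quandle qop \<rho>"
  shows "qop x (\<rho> y) = z \<longleftrightarrow> qop z y = x"
proof -
  have uniq: "\<exists>!z. qop z y = x"
    using assms by (simp add: symmetric_quandle_def quandle_def)
  have "qop x (\<rho> y) = qinv qop x y"
    using assms by (simp add: symmetric_quandle_def good_involution_def)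
  moreover have "qop (qinv qop x y) y = x"
    unfolding qinv_def by (rule theI'[OF uniq])
  moreover have "qop z y = x \<Longrightarrow> qinv qop x y = z"
    unfolding qinv_def by (rule the1_equality[OF uniq])
  ultimately show ?thesis by auto
qed

lemma Xrho_set_act_act_rho:
  assumes "Xrho_set qop \<rho> act"
  shows "act (act y x) (\<rho> x) = y"
  using assms by (simp add: Xrho_set_def)

lemma Xrho_set_act_eq_iff:
  assumes "symmetric_quandle qop \<rho>" and "Xrho_set qop \<rho> act"
  shows "act y x = z \<longleftrightarrow> act z (\<rho> x) = y"
  using Xrho_set_act_act_rho[OF assms(2), of y x] Xrho_set_act_act_rho[OF assms(2), of z "\<rho> x"]
    symmetric_quandle_rho_rho[OF assms(1)]
  by auto

text \<open>The label of \<open>e\<close> after turning its normal, by a basic inversion if necessary, to side \<open>b\<close>.\<close>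

definition normal_label :: "('x \<Rightarrow> 'x) \<Rightarrow> ('e \<Rightarrow> bool) \<Rightarrow> ('e \<Rightarrow> 'x) \<Rightarrow> 'e \<Rightarrow> bool \<Rightarrow> 'x" where
  "normal_label \<rho> n l e b = (if n e = b then l e else \<rho> (l e))"

lemma normal_label_self [simp]: "normal_label \<rho> n l e (n e) = l e"
  by (simp add: normal_label_def)

lemma normal_label_Not:
  assumes "\<And>x. \<rho> (\<rho> x) = x"
  shows "normal_label \<rho> n l e (\<not> b) = \<rho> (normal_label \<rho> n l e b)"
  using assms by (auto simp: normal_label_def)

lemma normal_label_basic_inv:
  assumes "\<And>x. \<rho> (\<rho> x) = x"
  shows "normal_label \<rho> (fst (basic_inv \<rho> r e)) (snd (basic_inv \<rho> r e)) = normal_label \<rho> (fst r) (snd r)"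
  using assms by (auto simp: normal_label_def basic_inv_def fun_eq_iff)

lemma normal_label_inv_step_rtrancl:
  assumes "(r, r') \<in> (inv_step \<rho> D)\<^sup>*" and "\<And>x. \<rho> (\<rho> x) = x"
  shows "normal_label \<rho> (fst r') (snd r') = normal_label \<rho> (fst r) (snd r)"
  using assms(1)
proof (induction rule: rtrancl_induct)
  case (step r' r'')
  then obtain e where "r'' = basic_inv \<rho> r' e" by (auto simp: inv_step_def)
  with step.IH show ?case by (simp add: normal_label_basic_inv[OF assms(2)])
qed simp

lemma basic_inv_basic_inv:
  assumes "\<And>x. \<rho> (\<rho> x) = x"
  shows "basic_inv \<rho> (basic_inv \<rho> r e) e = r"
  using assms by (auto simp: basic_inv_def fun_eq_iff)

lemma equiv_inv_step_rtrancl: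
  assumes "\<And>x. \<rho> (\<rho> x) = x"
  shows "equiv UNIV ((inv_step \<rho> D)\<^sup>*)"
proof (rule equivI)
  have "(r', r) \<in> inv_step \<rho> D" if "(r, r') \<in> inv_step \<rho> D" for r r'
  proof -
    from that obtain e where r': "r' = basic_inv \<rho> r e" and e: "e \<in> arcs D"
      by (auto simp: inv_step_def)
    from e have "(r', basic_inv \<rho> r' e) \<in> inv_step \<rho> D"
      unfolding inv_step_def by blast
    then show ?thesis
      using r' basic_inv_basic_inv[OF assms, of r e] by simp
  qed
  then have "sym (inv_step \<rho> D)" by (rule symI)
  then show "sym ((inv_step \<rho> D)\<^sup>*)" by (rule sym_rtrancl)
qed (simp_all add: refl_rtrancl trans_rtrancl)

lemma inv_step_rtrancl_flip:
  assumes "finite S" and "S \<subseteq> arcs D"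
  shows "(r, (\<lambda>e. if e \<in> S then \<not> fst r e else fst r e, \<lambda>e. if e \<in> S then \<rho> (snd r e) else snd r e))
         \<in> (inv_step \<rho> D)\<^sup>*"
  using assms
proof (induction S rule: finite_induct)
  case (insert e S)
  let ?r = "(\<lambda>e. if e \<in> S then \<not> fst r e else fst r e, \<lambda>e. if e \<in> S then \<rho> (snd r e) else snd r e)"
  have "(r, ?r) \<in> (inv_step \<rho> D)\<^sup>*"
    using insert.IH insert.prems by simp
  moreover have "(?r, basic_inv \<rho> ?r e) \<in> inv_step \<rho> D"
    using insert.prems unfolding inv_step_def by blast
  ultimately have "(r, basic_inv \<rho> ?r e) \<in> (inv_step \<rho> D)\<^sup>*"
    by (rule rtrancl_into_rtrancl)
  moreover have "basic_inv \<rho> ?r e = (\<lambda>e'. if e' \<in> insert e S then \<not> fst r e' else fst r e',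
      \<lambda>e'. if e' \<in> insert e S then \<rho> (snd r e') else snd r e')"
    using insert.hyps by (auto simp: basic_inv_def fun_eq_iff)
  ultimately show ?case by simp
qed simp

text \<open>In the notation of crossing_conds, r_i says whether the normal at end i already points to
  the right of its strand's direction of travel (ends 0 to 2 and 1 to 3); once all normals are
  turned that way, conditions (i) and (ii) become the oriented relations x1 = x3 and x0^x1 = x2.\<close>

lemma crossing_condition_normalise:
  assumes "symmetric_quandle qop \<rho>"
  shows "((if r1 = r3 then l1 = l3 else l1 = \<rho> l3) \<and>
          qop (if r1 then l0 else l2) l1 = (if r0 = r2 then (if r1 then l2 else l0) else \<rho> (if r1 then l2 else l0)))
     \<longleftrightarrow> ((if r1 then l1 else \<rho> l1) = (if r3 then l3 else \<rho> l3) \<and>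
          qop (if r0 then l0 else \<rho> l0) (if r1 then l1 else \<rho> l1) = (if r2 then l2 else \<rho> l2))"
proof -
  note rho_rho = symmetric_quandle_rho_rho[OF assms] and rho_qop = symmetric_quandle_rho_qop[OF assms]
  have rho_eq_iff: "\<rho> a = \<rho> b \<longleftrightarrow> a = b" for a b by (metis rho_rho)
  have qop_rho_left: "qop (\<rho> x) y = z \<longleftrightarrow> qop x y = \<rho> z" for x y z by (metis rho_rho rho_qop)
  show ?thesis
    apply (cases r0; cases r1; cases r2; cases r3)
    apply (simp_all add: rho_eq_iff qop_rho_left symmetric_quandle_qop_rho_eq_iff[OF assms] rho_rho rho_qop)
    apply (metis rho_rho)+
    done
qed

lemma crossing_conds_iff_normal_label:
  assumes "symmetric_quandle qop \<rho>"
  shows "crossing_conds qop \<rho> D n l \<longleftrightarrow> (\<forall>v\<in>crossings D.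
     normal_label \<rho> n l (sa D v 1) (inc D v 1) = normal_label \<rho> n l (sa D v 3) (\<not> inc D v 3) \<and>
     qop (normal_label \<rho> n l (sa D v 0) (inc D v 0)) (normal_label \<rho> n l (sa D v 1) (inc D v 1))
       = normal_label \<rho> n l (sa D v 2) (\<not> inc D v 2))"
  unfolding crossing_conds_def Let_def normal_label_def
  by (intro ball_cong refl) (simp only: if_distrib[of l] crossing_condition_normalise[OF assms])

lemma region_cond_iff_normal_label:
  assumes "symmetric_quandle qop \<rho>" and "Xrho_set qop \<rho> act"
  shows "region_cond act D n l yl \<longleftrightarrow>
    (\<forall>e\<in>arcs D. act (yl (lreg D e)) (normal_label \<rho> n l e True) = yl (rreg D e))"
  unfolding region_cond_def
proof (intro ball_cong refl)
  fix e
  show "(if n e then act (yl (lreg D e)) (l e) = yl (rreg D e) else act (yl (rreg D e)) (l e) = yl (lreg D e))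
    \<longleftrightarrow> act (yl (lreg D e)) (normal_label \<rho> n l e True) = yl (rreg D e)"
    using Xrho_set_act_eq_iff[OF assms, of "yl (rreg D e)" "l e"] by (simp add: normal_label_def)
qed

lemma crossing_conds_cong:
  assumes "symmetric_quandle qop \<rho>" and "link_diagram D"
    and "\<forall>e\<in>arcs D. normal_label \<rho> n l e = normal_label \<rho> n' l' e"
  shows "crossing_conds qop \<rho> D n l \<longleftrightarrow> crossing_conds qop \<rho> D n' l'"
proof -
  have "normal_label \<rho> n l (sa D v i) = normal_label \<rho> n' l' (sa D v i)"
    if "v \<in> crossings D" "i < 4" for v i
    using assms(2,3) that by (auto simp: link_diagram_def)
  then show ?thesis
    unfolding crossing_conds_iff_normal_label[OF assms(1)] by (intro ball_cong refl) simp
qed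

lemma region_cond_cong:
  assumes "symmetric_quandle qop \<rho>" and "Xrho_set qop \<rho> act"
    and "\<forall>e\<in>arcs D. normal_label \<rho> n l e = normal_label \<rho> n' l' e"
  shows "region_cond act D n l yl \<longleftrightarrow> region_cond act D n' l' yl"
  using assms(3) unfolding region_cond_iff_normal_label[OF assms(1,2)] by simp

lemma crossing_weight_normal_label:
  "crossing_weight \<rho> \<theta> D n l yl v k =
    (let xk = normal_label \<rho> n l (sa D v k) (\<not> inc D v k);
         xj = normal_label \<rho> n l (sa D v (nxt k)) (inc D v (nxt k));
         y = yl (corner D v k)
     in if even k then \<theta> y xk xj else - \<theta> y xj xk)"
  by (simp add: crossing_weight_def normal_label_def Let_def)

lemma crossing_weight_cong:
  assumes "link_diagram D" and "v \<in> crossings D" and "k < 4"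
    and "\<forall>e\<in>arcs D. normal_label \<rho> n l e = normal_label \<rho> n' l' e"
  shows "crossing_weight \<rho> \<theta> D n l yl v k = crossing_weight \<rho> \<theta> D n' l' yl v k"
proof -
  have "nxt k < 4" by (simp add: nxt_def)
  then have "sa D v k \<in> arcs D" "sa D v (nxt k) \<in> arcs D"
    using assms(1-3) by (auto simp: link_diagram_def)
  then show ?thesis
    using assms(4) unfolding crossing_weight_normal_label by simp
qed

lemma region_cond_across_end:
  assumes "symmetric_quandle qop \<rho>" and "Xrho_set qop \<rho> act" and "link_diagram D"
    and "region_cond act D n l yl" and "v \<in> crossings D" and "j < 4"
  shows "act (yl (corner_cw D v j)) (normal_label \<rho> n l (sa D v j) (inc D v j)) = yl (corner D v j)"
proof -
  let ?e = "sa D v j"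
  have "?e \<in> arcs D" using assms(3,5,6) by (simp add: link_diagram_def)
  then have across: "act (yl (lreg D ?e)) (normal_label \<rho> n l ?e True) = yl (rreg D ?e)"
    using assms(4) unfolding region_cond_iff_normal_label[OF assms(1,2)] by blast
  show ?thesis
  proof (cases "inc D v j")
    case True
    with across show ?thesis by (simp add: corner_def corner_cw_def)
  next
    case False
    have "normal_label \<rho> n l ?e False = \<rho> (normal_label \<rho> n l ?e True)"
      using normal_label_Not[OF symmetric_quandle_rho_rho[OF assms(1)], of n l ?e True] by simp
    with False across show ?thesis
      by (simp add: corner_def corner_cw_def Xrho_set_act_eq_iff[OF assms(1,2), of "yl (rreg D ?e)"]
          symmetric_quandle_rho_rho[OF assms(1)])
  qed
qed

lemma region_labels_around_crossing:
  assumes "symmetric_quandle qop \<rho>" and "Xrho_set qop \<rho> act" and "link_diagram D"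
    and "region_cond act D n l yl" and "v \<in> crossings D"
  shows "yl (corner D v 0) = act (yl (corner D v 3)) (normal_label \<rho> n l (sa D v 0) (inc D v 0))"
    and "yl (corner D v 2) = act (yl (corner D v 1)) (normal_label \<rho> n l (sa D v 2) (inc D v 2))"
    and "yl (corner D v 3) = act (yl (corner D v 2)) (normal_label \<rho> n l (sa D v 3) (inc D v 3))"
proof -
  have cw: "corner_cw D v (nxt i) = corner D v i" if "i < 4" for i
    using assms(3,5) that by (simp add: link_diagram_def)
  have "nxt 3 = 0" "nxt 1 = 2" "nxt 2 = 3" by (simp_all add: nxt_def)
  then have "corner_cw D v 0 = corner D v 3" "corner_cw D v 2 = corner D v 1"
    "corner_cw D v 3 = corner D v 2"
    using cw[of 3] cw[of 1] cw[of 2] by simp_all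
  with region_cond_across_end[OF assms, of 0] region_cond_across_end[OF assms, of 2]
    region_cond_across_end[OF assms, of 3]
  show "yl (corner D v 0) = act (yl (corner D v 3)) (normal_label \<rho> n l (sa D v 0) (inc D v 0))"
    "yl (corner D v 2) = act (yl (corner D v 1)) (normal_label \<rho> n l (sa D v 2) (inc D v 2))"
    "yl (corner D v 3) = act (yl (corner D v 2)) (normal_label \<rho> n l (sa D v 3) (inc D v 3))"
    by simp_all
qed

text \<open>Here x_i is the normalised label at end i and y_i the region label at corner i of a crossing;
  the two D^\<rho>-conditions carry the weight from corner 3 to each of the other corners.\<close>

lemma two_cocycle_Qrho_weights_around_crossing:
  fixes \<theta> :: "'y \<Rightarrow> 'x \<Rightarrow> 'x \<Rightarrow> 'a::ab_group_add"
  assumes "symmetric_quandle qop \<rho>" and "Xrho_set qop \<rho> act"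
    and "two_cocycle_Qrho qop \<rho> act \<theta>"
    and "x3 = x1" and "qop x0 x1 = x2"
    and "y0 = act y3 x0" and "y2 = act y1 (\<rho> x2)" and "y3 = act y2 (\<rho> x3)"
  shows "\<theta> y0 (\<rho> x0) x1 = - \<theta> y3 x0 x3"
    and "\<theta> y1 (\<rho> x2) (\<rho> x1) = \<theta> y3 x0 x3"
    and "\<theta> y2 x2 (\<rho> x3) = - \<theta> y3 x0 x3"
proof -
  have inv1: "\<theta> y x1 x2 + \<theta> (act y x1) (\<rho> x1) x2 = 0"
    and inv2: "\<theta> y x1 x2 + \<theta> (act y x2) (qop x1 x2) (\<rho> x2) = 0" for y x1 x2
    using assms(3) by (simp_all add: two_cocycle_Qrho_def)
  have y2: "act y3 x1 = y2"
    using assms(4,8) Xrho_set_act_act_rho[OF assms(2), of y2 "\<rho> x1"]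
      symmetric_quandle_rho_rho[OF assms(1)] by simp
  show w0: "\<theta> y0 (\<rho> x0) x1 = - \<theta> y3 x0 x3"
    using inv1[of y3 x0 x1] assms(4,6) by (simp add: eq_neg_iff_add_eq_0 add.commute)
  show w2: "\<theta> y2 x2 (\<rho> x3) = - \<theta> y3 x0 x3"
    using inv2[of y3 x0 x1] assms(4,5) y2 by (simp add: eq_neg_iff_add_eq_0 add.commute)
  have "\<theta> y1 (\<rho> x2) (\<rho> x1) + \<theta> y2 x2 (\<rho> x1) = 0"
    using inv1[of y1 "\<rho> x2" "\<rho> x1"] assms(7) symmetric_quandle_rho_rho[OF assms(1)] by simp
  then have "\<theta> y1 (\<rho> x2) (\<rho> x1) = - \<theta> y2 x2 (\<rho> x1)"
    by (simp add: eq_neg_iff_add_eq_0)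
  with w2 assms(4) show "\<theta> y1 (\<rho> x2) (\<rho> x1) = \<theta> y3 x0 x3" by simp
qed

lemma crossing_weight_eq_corner_0:
  fixes \<theta> :: "'y \<Rightarrow> 'x \<Rightarrow> 'x \<Rightarrow> 'a::ab_group_add"
  assumes sq: "symmetric_quandle qop \<rho>" and xs: "Xrho_set qop \<rho> act"
    and cocycle: "two_cocycle_Qrho qop \<rho> act \<theta>" and D: "link_diagram D"
    and "crossing_conds qop \<rho> D n l" and "region_cond act D n l yl"
    and v: "v \<in> crossings D" and "k < 4"
  shows "crossing_weight \<rho> \<theta> D n l yl v k = crossing_weight \<rho> \<theta> D n l yl v 0"
proof -
  define s where "s = normal_label \<rho> n l"
  define x0 x1 x2 x3 where "x0 = s (sa D v 0) (inc D v 0)" and "x1 = s (sa D v 1) (inc D v 1)"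
    and "x2 = s (sa D v 2) (\<not> inc D v 2)" and "x3 = s (sa D v 3) (\<not> inc D v 3)"
  define y0 y1 y2 y3 where "y0 = yl (corner D v 0)" and "y1 = yl (corner D v 1)"
    and "y2 = yl (corner D v 2)" and "y3 = yl (corner D v 3)"
  note rho_rho = symmetric_quandle_rho_rho[OF sq]
  have flip: "s e (\<not> b) = \<rho> (s e b)" for e b
    unfolding s_def by (rule normal_label_Not[OF rho_rho])
  have conds: "x3 = x1" "qop x0 x1 = x2"
    using assms(5) v unfolding crossing_conds_iff_normal_label[OF sq] s_def x0_def x1_def x2_def x3_def
    by auto
  have "s (sa D v i) (inc D v i) = \<rho> (s (sa D v i) (\<not> inc D v i))" for i
    using flip[of "sa D v i" "\<not> inc D v i"] by simp
  then have regions: "y0 = act y3 x0" "y2 = act y1 (\<rho> x2)" "y3 = act y2 (\<rho> x3)"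
    using region_labels_around_crossing[OF sq xs D assms(6) v]
    by (simp_all add: s_def x0_def x2_def x3_def y0_def y1_def y2_def y3_def)
  note weights = two_cocycle_Qrho_weights_around_crossing[OF sq xs cocycle conds regions]
  have nxt_values: "nxt 0 = 1" "nxt 1 = 2" "nxt 2 = 3" "nxt 3 = 0" by (simp_all add: nxt_def)
  have "crossing_weight \<rho> \<theta> D n l yl v k = - \<theta> y3 x0 x3" if "k < 4" for k
  proof -
    from that have "k \<in> {0, 1, 2, 3}" by auto
    with weights nxt_values show ?thesis
      unfolding crossing_weight_normal_label Let_def s_def[symmetric]
      by (auto simp: flip rho_rho x0_def x1_def x2_def x3_def y0_def y1_def y2_def y3_def)
  qed
  from this[of k] this[of 0] show ?thesis using assms(8) by simp
qed

text \<open>Exactly one corner of a crossing has both adjacent normals of the orientation pointing away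
  from it.\<close>

lemma orientation_sum_source_corner:
  fixes c :: "'a::comm_monoid_add"
  assumes "orientation D ori" and "v \<in> crossings D"
  shows "(\<Sum>k<4. if (\<not> ori (sa D v k)) = (\<not> inc D v k) \<and> (\<not> ori (sa D v (nxt k))) = inc D v (nxt k)
                 then c else 0) = c"
proof -
  have one_source:
    "(if (\<not> a0) = (\<not> i0) \<and> (\<not> a1) = i1 then c else 0) + (if (\<not> a1) = (\<not> i1) \<and> (\<not> a2) = i2 then c else 0) +
     (if (\<not> a2) = (\<not> i2) \<and> (\<not> a3) = i3 then c else 0) + (if (\<not> a3) = (\<not> i3) \<and> (\<not> a0) = i0 then c else 0) = c"
    if "(i0 = a0) \<noteq> (i2 = a2)" and "(i1 = a1) \<noteq> (i3 = a3)" for a0 a1 a2 a3 i0 i1 i2 i3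
    using that by (cases a0; cases a1; cases a2; cases a3; cases i0; cases i1) simp_all
  have strand: "(inc D v i = ori (sa D v i)) \<noteq> (inc D v (i + 2) = ori (sa D v (i + 2)))"
    if "i < 2" for i
    using assms that unfolding orientation_def by blast
  have lt: "(0::nat) < 2" "(1::nat) < 2" and sums: "(0::nat) + 2 = 2" "(1::nat) + 2 = 3"
    by simp_all
  note one_source = one_source[OF strand[OF lt(1), unfolded sums(1)] strand[OF lt(2), unfolded sums(2)]]
  have "(\<Sum>k<4. f k) = f 0 + f 1 + f 2 + f 3" for f :: "nat \<Rightarrow> 'a"
  proof -
    have "{..<4::nat} = {0, 1, 2, 3}" by auto
    then show ?thesis by (simp add: add_ac)
  qed
  moreover have "nxt 0 = 1" "nxt 1 = 2" "nxt 2 = 3" "nxt 3 = 0" by (simp_all add: nxt_def)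
  ultimately show ?thesis
    using one_source by (simp only:)
qed

lemma Phi_ori_eq_sum_corner_0:
  fixes \<theta> :: "'y \<Rightarrow> 'x \<Rightarrow> 'x \<Rightarrow> 'a::ab_group_add"
  assumes "symmetric_quandle qop \<rho>" and "Xrho_set qop \<rho> act" and "two_cocycle_Qrho qop \<rho> act \<theta>"
    and "link_diagram D" and "orientation D ori" and "C \<in> ori_colorings qop \<rho> act D ori"
  shows "Phi_ori \<rho> \<theta> D ori C = (\<Sum>v\<in>crossings D. crossing_weight \<rho> \<theta> D (\<lambda>e. \<not> ori e) (fst C) (snd C) v 0)"
  unfolding Phi_ori_def
proof (rule sum.cong[OF refl])
  fix v assume v: "v \<in> crossings D"
  let ?src = "\<lambda>k. (\<not> ori (sa D v k)) = (\<not> inc D v k) \<and> (\<not> ori (sa D v (nxt k))) = inc D v (nxt k)"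
  let ?w = "crossing_weight \<rho> \<theta> D (\<lambda>e. \<not> ori e) (fst C) (snd C) v"
  have "crossing_conds qop \<rho> D (\<lambda>e. \<not> ori e) (fst C)" and "region_cond act D (\<lambda>e. \<not> ori e) (fst C) (snd C)"
    using assms(6) by (auto simp: ori_colorings_def)
  note corner_indep = crossing_weight_eq_corner_0[OF assms(1-4) this v]
  have "(\<Sum>k<4. if ?src k then ?w k else 0) = (\<Sum>k<4. if ?src k then ?w 0 else 0)"
  proof (rule sum.cong[OF refl])
    fix k :: nat assume "k \<in> {..<4}"
    then show "(if ?src k then ?w k else 0) = (if ?src k then ?w 0 else 0)"
      using corner_indep[of k] by simp
  qed
  also have "\<dots> = ?w 0"
    by (rule orientation_sum_source_corner[OF assms(5) v])
  finally show "(\<Sum>k<4. if ?src k then ?w k else 0) = ?w 0" .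
qed

text \<open>The normals induced by the orientation, set to \<open>False\<close> off the semi-arcs as \<open>valid_rep\<close>
  requires.\<close>

definition ori_normal :: "('v, 'e, 'f, 'z) diagram_scheme \<Rightarrow> ('e \<Rightarrow> bool) \<Rightarrow> 'e \<Rightarrow> bool" where
  "ori_normal D ori e \<longleftrightarrow> e \<in> arcs D \<and> \<not> ori e"

definition unori_of_ori :: "('x \<Rightarrow> 'x) \<Rightarrow> ('v, 'e, 'f, 'z) diagram_scheme \<Rightarrow> ('e \<Rightarrow> bool)
    \<Rightarrow> ('e \<Rightarrow> 'x) \<times> ('f \<Rightarrow> 'y) \<Rightarrow> (('e \<Rightarrow> bool) \<times> ('e \<Rightarrow> 'x)) set \<times> ('f \<Rightarrow> 'y)" where
  "unori_of_ori \<rho> D ori C = ((inv_step \<rho> D)\<^sup>* `` {(ori_normal D ori, fst C)}, snd C)"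

lemma normal_label_ori_normal:
  "e \<in> arcs D \<Longrightarrow> normal_label \<rho> (ori_normal D ori) l e = normal_label \<rho> (\<lambda>e. \<not> ori e) l e"
  by (simp add: ori_normal_def normal_label_def fun_eq_iff)

lemma Phi_unori_Image:
  assumes "\<And>x. \<rho> (\<rho> x) = x" and "link_diagram D" and "(r0, r) \<in> (inv_step \<rho> D)\<^sup>*"
  shows "Phi_unori \<rho> \<theta> D ((inv_step \<rho> D)\<^sup>* `` {r0}, yl)
       = (\<Sum>v\<in>crossings D. crossing_weight \<rho> \<theta> D (fst r) (snd r) yl v 0)"
proof -
  define r' where "r' = (SOME r'. r' \<in> (inv_step \<rho> D)\<^sup>* `` {r0})"
  have "r' \<in> (inv_step \<rho> D)\<^sup>* `` {r0}"
    unfolding r'_def by (rule someI[of _ r0]) simp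
  then have "normal_label \<rho> (fst r') (snd r') = normal_label \<rho> (fst r) (snd r)"
    using normal_label_inv_step_rtrancl[OF _ assms(1)] assms(3) by (metis Image_singleton_iff)
  then show ?thesis
    unfolding Phi_unori_def r'_def[symmetric] Let_def fst_conv snd_conv
    by (intro sum.cong refl crossing_weight_cong[OF assms(2)]) simp_all
qed

lemma Phi_unori_unori_of_ori:
  fixes \<theta> :: "'y \<Rightarrow> 'x \<Rightarrow> 'x \<Rightarrow> 'a::ab_group_add"
  assumes "symmetric_quandle qop \<rho>" and "Xrho_set qop \<rho> act" and "two_cocycle_Qrho qop \<rho> act \<theta>"
    and "link_diagram D" and "orientation D ori" and "C \<in> ori_colorings qop \<rho> act D ori"
  shows "Phi_unori \<rho> \<theta> D (unori_of_ori \<rho> D ori C) = Phi_ori \<rho> \<theta> D ori C"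
proof -
  have "Phi_unori \<rho> \<theta> D (unori_of_ori \<rho> D ori C)
      = (\<Sum>v\<in>crossings D. crossing_weight \<rho> \<theta> D (ori_normal D ori) (fst C) (snd C) v 0)"
    unfolding unori_of_ori_def
    using Phi_unori_Image[of \<rho> D "(ori_normal D ori, fst C)" "(ori_normal D ori, fst C)",
        OF symmetric_quandle_rho_rho[OF assms(1)] assms(4) rtrancl_refl]
    by simp
  also have "\<dots> = (\<Sum>v\<in>crossings D. crossing_weight \<rho> \<theta> D (\<lambda>e. \<not> ori e) (fst C) (snd C) v 0)"
    by (intro sum.cong refl crossing_weight_cong[OF assms(4)]) (simp_all add: normal_label_ori_normal)
  also have "\<dots> = Phi_ori \<rho> \<theta> D ori C"
    by (rule Phi_ori_eq_sum_corner_0[OF assms, symmetric])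
  finally show ?thesis .
qed

lemma inv_step_rtrancl_to_normals:
  assumes "finite (arcs D)" and "\<forall>e. e \<notin> arcs D \<longrightarrow> \<not> fst r e \<and> snd r e = undefined"
    and "\<forall>e. e \<notin> arcs D \<longrightarrow> \<not> n e"
  obtains l where "(r, (n, l)) \<in> (inv_step \<rho> D)\<^sup>*" and "\<forall>e. e \<notin> arcs D \<longrightarrow> l e = undefined"
proof
  define S where "S = {e \<in> arcs D. fst r e \<noteq> n e}"
  have "finite S" and "S \<subseteq> arcs D"
    using assms(1) by (auto simp: S_def)
  moreover have "(\<lambda>e. if e \<in> S then \<not> fst r e else fst r e) = n"
    using assms(2,3) by (auto simp: S_def fun_eq_iff)
  ultimately show "(r, (n, \<lambda>e. if e \<in> S then \<rho> (snd r e) else snd r e)) \<in> (inv_step \<rho> D)\<^sup>*"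
    using inv_step_rtrancl_flip[of S D r \<rho>] by simp
  show "\<forall>e. e \<notin> arcs D \<longrightarrow> (if e \<in> S then \<rho> (snd r e) else snd r e) = undefined"
    using assms(2) by (simp add: S_def)
qed

lemma unori_of_ori_in_unori_colorings:
  assumes "symmetric_quandle qop \<rho>" and "Xrho_set qop \<rho> act" and "link_diagram D"
    and "C \<in> ori_colorings qop \<rho> act D ori"
  shows "unori_of_ori \<rho> D ori C \<in> unori_colorings qop \<rho> act D"
proof -
  obtain l yl where C: "C = (l, yl)" by fastforce
  have same_labels: "\<forall>e\<in>arcs D. normal_label \<rho> (ori_normal D ori) l e = normal_label \<rho> (\<lambda>e. \<not> ori e) l e"
    by (simp add: normal_label_ori_normal)
  have "valid_rep qop \<rho> D (ori_normal D ori, l)"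
    using assms(4) crossing_conds_cong[OF assms(1,3) same_labels]
    by (simp add: C ori_colorings_def valid_rep_def ori_normal_def)
  moreover have "region_cond act D (ori_normal D ori) l yl"
    using assms(4) region_cond_cong[OF assms(1,2) same_labels] by (simp add: C ori_colorings_def)
  ultimately show ?thesis
    using assms(4)
    by (auto simp: C unori_of_ori_def unori_colorings_def ori_colorings_def
        intro!: quotientI bexI[of _ "(ori_normal D ori, l)"])
qed

lemma inj_unori_of_ori:
  assumes "\<And>x. \<rho> (\<rho> x) = x"
  shows "inj (unori_of_ori \<rho> D ori)"
proof (rule injI)
  fix C C' assume eq: "unori_of_ori \<rho> D ori C = unori_of_ori \<rho> D ori C'"
  then have "(ori_normal D ori, fst C') \<in> (inv_step \<rho> D)\<^sup>* `` {(ori_normal D ori, fst C)}"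
    by (simp add: unori_of_ori_def)
  then have "normal_label \<rho> (ori_normal D ori) (fst C') = normal_label \<rho> (ori_normal D ori) (fst C)"
    using normal_label_inv_step_rtrancl[OF _ assms] by fastforce
  then have "fst C' = fst C"
    by (metis normal_label_self ext)
  moreover have "snd C' = snd C"
    using eq by (simp add: unori_of_ori_def)
  ultimately show "C = C'" by (simp add: prod_eq_iff)
qed

lemma unori_colorings_subset_image_unori_of_ori:
  assumes "symmetric_quandle qop \<rho>" and "Xrho_set qop \<rho> act" and "link_diagram D"
  shows "unori_colorings qop \<rho> act D \<subseteq> unori_of_ori \<rho> D ori ` ori_colorings qop \<rho> act D ori"
proof
  fix Cy assume "Cy \<in> unori_colorings qop \<rho> act D"
  then obtain Cl yl r r' where Cy: "Cy = (Cl, yl)" and Cl: "Cl = (inv_step \<rho> D)\<^sup>* `` {r}"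
    and valid: "valid_rep qop \<rho> D r" and yl: "\<forall>f. f \<notin> regions D \<longrightarrow> yl f = undefined"
    and "r' \<in> Cl" and region: "region_cond act D (fst r') (snd r') yl"
    by (auto simp: unori_colorings_def elim!: quotientE)
  note rho_rho = symmetric_quandle_rho_rho[OF assms(1)]
  note equiv = equiv_inv_step_rtrancl[OF rho_rho, of D]
  have "finite (arcs D)" using assms(3) by (simp add: link_diagram_def)
  moreover have "\<forall>e. e \<notin> arcs D \<longrightarrow> \<not> fst r e \<and> snd r e = undefined"
    using valid by (simp add: valid_rep_def)
  moreover have "\<forall>e. e \<notin> arcs D \<longrightarrow> \<not> ori_normal D ori e" by (simp add: ori_normal_def)
  ultimately obtain l where reach: "(r, (ori_normal D ori, l)) \<in> (inv_step \<rho> D)\<^sup>*"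
    and l: "\<forall>e. e \<notin> arcs D \<longrightarrow> l e = undefined"
    by (rule inv_step_rtrancl_to_normals)
  have Cl_eq: "Cl = (inv_step \<rho> D)\<^sup>* `` {(ori_normal D ori, l)}"
    unfolding Cl by (rule equiv_class_eq[OF equiv reach])
  have "(r, r') \<in> (inv_step \<rho> D)\<^sup>*" using \<open>r' \<in> Cl\<close> Cl by simp
  have "normal_label \<rho> (fst r) (snd r) = normal_label \<rho> (ori_normal D ori) l"
    using normal_label_inv_step_rtrancl[OF reach rho_rho] by simp
  then have same_labels_r: "\<forall>e\<in>arcs D. normal_label \<rho> (fst r) (snd r) e = normal_label \<rho> (\<lambda>e. \<not> ori e) l e"
    by (simp add: normal_label_ori_normal)
  moreover have "normal_label \<rho> (fst r') (snd r') = normal_label \<rho> (fst r) (snd r)"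
    by (rule normal_label_inv_step_rtrancl[OF \<open>(r, r') \<in> _\<close> rho_rho])
  ultimately have same_labels_r': "\<forall>e\<in>arcs D. normal_label \<rho> (fst r') (snd r') e = normal_label \<rho> (\<lambda>e. \<not> ori e) l e"
    by simp
  have "(l, yl) \<in> ori_colorings qop \<rho> act D ori"
    using l yl valid crossing_conds_cong[OF assms(1,3) same_labels_r]
      region region_cond_cong[OF assms(1,2) same_labels_r']
    by (simp add: ori_colorings_def valid_rep_def)
  moreover have "unori_of_ori \<rho> D ori (l, yl) = Cy"
    by (simp add: unori_of_ori_def Cy Cl_eq)
  ultimately show "Cy \<in> unori_of_ori \<rho> D ori ` ori_colorings qop \<rho> act D ori" by force
qed

lemma bij_betw_unori_of_ori:
  assumes "symmetric_quandle qop \<rho>" and "Xrho_set qop \<rho> act" and "link_diagram D"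
  shows "bij_betw (unori_of_ori \<rho> D ori) (ori_colorings qop \<rho> act D ori) (unori_colorings qop \<rho> act D)"
proof -
  have "inj_on (unori_of_ori \<rho> D ori) (ori_colorings qop \<rho> act D ori)"
    using inj_unori_of_ori[OF symmetric_quandle_rho_rho[OF assms(1)]] by (rule inj_on_subset) simp
  moreover have "unori_of_ori \<rho> D ori ` ori_colorings qop \<rho> act D ori \<subseteq> unori_colorings qop \<rho> act D"
    using unori_of_ori_in_unori_colorings[OF assms] by blast
  ultimately show ?thesis
    unfolding bij_betw_def using unori_colorings_subset_image_unori_of_ori[OF assms] by blast
qed

lemma bij_betw_level_sets:
  assumes "bij_betw f A B" and "\<And>x. x \<in> A \<Longrightarrow> g (f x) = h x"
  shows "bij_betw f {x \<in> A. h x = c} {y \<in> B. g y = c}"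
proof (rule bij_betw_subset[OF assms(1)])
  show "f ` {x \<in> A. h x = c} = {y \<in> B. g y = c}"
    using assms by (auto simp: bij_betw_def)
qed auto

theorem theorem6p7:
  fixes qop :: "'x \<Rightarrow> 'x \<Rightarrow> 'x" and \<rho> :: "'x \<Rightarrow> 'x" and act :: "'y \<Rightarrow> 'x \<Rightarrow> 'y"
    and \<theta> :: "'y \<Rightarrow> 'x \<Rightarrow> 'x \<Rightarrow> 'a::ab_group_add"
    and D :: "('v, 'e, 'f) diagram" and ori :: "'e \<Rightarrow> bool"
  assumes "symmetric_quandle qop \<rho>"
    and "Xrho_set qop \<rho> act"
    and "two_cocycle_Qrho qop \<rho> act \<theta>"
    and "link_diagram D"
    and "orientation D ori"
  shows "\<forall>a. {C \<in> unori_colorings qop \<rho> act D. Phi_unori \<rho> \<theta> D C = a}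
           \<approx> {C \<in> ori_colorings qop \<rho> act D ori. Phi_ori \<rho> \<theta> D ori C = a}"
proof
  fix a
  have "bij_betw (unori_of_ori \<rho> D ori)
      {C \<in> ori_colorings qop \<rho> act D ori. Phi_ori \<rho> \<theta> D ori C = a}
      {C \<in> unori_colorings qop \<rho> act D. Phi_unori \<rho> \<theta> D C = a}"
    using bij_betw_unori_of_ori[OF assms(1,2,4)] Phi_unori_unori_of_ori[OF assms]
    by (rule bij_betw_level_sets)
  then show "{C \<in> unori_colorings qop \<rho> act D. Phi_unori \<rho> \<theta> D C = a}
           \<approx> {C \<in> ori_colorings qop \<rho> act D ori. Phi_ori \<rho> \<theta> D ori C = a}"
    by (meson eqpoll_def eqpoll_sym)
qed

end
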